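(* Let $n\geq 1$ with $n\neq 5$, and let $G$ be an $n$-vertex planar graph containing no subgraph isomorphic to $S_{2,2}$. Then $e(G)\leq 2n-2$.
   Context: All graphs are finite and simple; $e(G)$ denotes the number of edges of $G$. The double star $S_{2,2}$ is the tree obtained from an edge $xy$ by joining $x$ to two new vertices and $y$ to two further new vertices (6 vertices in total). *)

theory Defs
  imports "HOL-Analysis.Analysis"
begin

definition simple_graph :: "'a set \<Rightarrow> 'a set set \<Rightarrow> bool" where
  "simple_graph V E \<longleftrightarrow> finite V \<and> (\<forall>e\<in>E. e \<subseteq> V \<and> card e = 2)"

text \<open>Planarity: a drawing in the plane (complex numbers = R^2), vertices mapped to
distinct points, each edge drawn as an arc between the images of its endpoints,
meeting the drawn vertices only at its endpoints, and two distinct edges meet only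
in the images of common endpoints.\<close>
definition planar :: "'a set \<Rightarrow> 'a set set \<Rightarrow> bool" where
  "planar V E \<longleftrightarrow>
     (\<exists>(p :: 'a \<Rightarrow> complex) (\<gamma> :: 'a set \<Rightarrow> real \<Rightarrow> complex).
        inj_on p V \<and>
        (\<forall>e\<in>E. arc (\<gamma> e) \<and> {pathstart (\<gamma> e), pathfinish (\<gamma> e)} = p ` e \<and>
                 path_image (\<gamma> e) \<inter> p ` V = p ` e) \<and>
        (\<forall>e\<in>E. \<forall>f\<in>E. e \<noteq> f \<longrightarrow> path_image (\<gamma> e) \<inter> path_image (\<gamma> f) \<subseteq> p ` (e \<inter> f)))"

text \<open>G contains a (not necessarily induced) subgraph isomorphic to the double star S_{2,2}:
an edge xy, x adjacent to two further vertices a,b, y adjacent to two further vertices c,d,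
all six vertices distinct.\<close>
definition contains_S22 :: "'a set \<Rightarrow> 'a set set \<Rightarrow> bool" where
  "contains_S22 V E \<longleftrightarrow>
     (\<exists>x y a b c d. distinct [x, y, a, b, c, d] \<and> {x, y, a, b, c, d} \<subseteq> V \<and>
        {x, y} \<in> E \<and> {x, a} \<in> E \<and> {x, b} \<in> E \<and> {y, c} \<in> E \<and> {y, d} \<in> E)"

end

theory Submission
  imports Defs "HOL-Complex_Analysis.Winding_Numbers"
begin

text \<open>Planarity enters only through the non-planarity of \<open>K\<^sub>5\<close>, which follows from the Jordan
  curve theorem: in a plane drawing of \<open>K\<^sub>5\<close> the pentagon \<open>01234\<close> is a Jordan curve, two
  diagonals with interleaved ends cannot lie on the same side of it, and the five diagonals form
  an odd cycle of interleaved pairs.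

  In an \<open>S\<^sub>2\<^sub>,\<^sub>2\<close>-free graph every neighbour of a vertex of degree at least 5 has degree at
  most 2. If such a vertex exists, every edge has an end of degree at most 2 or joins two vertices
  of degree 3 or 4, and counting gives at most \<open>2(n - 1)\<close> edges. Otherwise all degrees are at
  most 4 and it suffices that the total deficiency \<open>\<Sum>(4 - d(v))\<close> is at least 4. If it were
  smaller, some vertex of degree 4 would have only neighbours of degree at least 3; then its
  closed neighbourhood is a component, which, not being a \<open>K\<^sub>5\<close>, has deficiency at least 2, and
  so has the rest of the graph, which is nonempty as \<open>n \<ge> 6\<close>.\<close>

section \<open>Non-planarity of \<open>K\<^sub>5\<close>\<close>

lemma arc_open_image:
  assumes "arc g"
  shows "g ` {0<..<1} = path_image g - {pathstart g, pathfinish g}"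
proof -
  have inj: "inj_on g {0..1}" using assms by (simp add: arc_def)
  have "{0..1::real} = {0<..<1} \<union> {0, 1}" by auto
  then have "path_image g = g ` {0<..<1} \<union> {pathstart g, pathfinish g}"
    by (simp add: path_image_def pathstart_def pathfinish_def)
  moreover have "g ` {0<..<1} \<inter> {pathstart g, pathfinish g} = {}"
    using inj_onD[OF inj] by (force simp: pathstart_def pathfinish_def)
  ultimately show ?thesis by blast
qed

lemma connected_arc_open_image:
  assumes "arc g"
  shows "connected (g ` {0<..<1})"
proof -
  have "continuous_on {0..1} g" using assms arc_imp_path path_def by blast
  then have "continuous_on {0<..<1} g" by (rule continuous_on_subset) auto
  then show ?thesis by (rule connected_continuous_image) simp
qed

lemma connected_insert_arc_open_image:
  assumes "arc g" "x \<in> path_image g"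
  shows "connected (insert x (g ` {0<..<1}))"
proof -
  have "continuous_on {0..1} g" using assms(1) arc_imp_path path_def by blast
  have "g ` closure {0<..<1::real} \<subseteq> closure (g ` {0<..<1})"
    by (rule image_closure_subset)
      (use \<open>continuous_on {0..1} g\<close> closure_subset[of "g ` {0<..<1}"] in auto)
  then have "path_image g \<subseteq> closure (g ` {0<..<1})" by (simp add: path_image_def)
  then show ?thesis
    by (intro connected_intermediate_closure[OF connected_arc_open_image[OF assms(1)]])
      (use assms(2) closure_subset[of "g ` {0<..<1}"] in auto)
qed

lemma simple_loop_join_arcs:
  assumes "arc g" "arc h" "pathstart h = pathstart g" "pathfinish h = pathfinish g"
    and "path_image g \<inter> path_image h \<subseteq> {pathstart g, pathfinish g}"
  shows "simple_path (g +++ reversepath h)"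
    and "pathfinish (g +++ reversepath h) = pathstart (g +++ reversepath h)"
    and "path_image (g +++ reversepath h) = path_image g \<union> path_image h"
  using assms by (auto intro!: simple_path_join_loop simp: arc_reversepath path_image_join)

lemma simple_closed_path_inside_iff_winding_number:
  fixes k :: "real \<Rightarrow> complex"
  assumes "simple_path k" "pathfinish k = pathstart k" "z \<notin> path_image k"
  shows "z \<in> inside (path_image k) \<longleftrightarrow> winding_number k z \<noteq> 0"
proof
  assume "z \<in> inside (path_image k)"
  then show "winding_number k z \<noteq> 0"
    using simple_closed_path_norm_winding_number_inside[OF assms(1)] by force
next
  assume "winding_number k z \<noteq> 0"
  then show "z \<in> inside (path_image k)"
    using assms inside_Un_outside winding_number_zero_in_outside simple_path_imp_path by blast
qed

lemma connected_inside_or_outside: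
  fixes k :: "real \<Rightarrow> complex"
  assumes "simple_path k" "pathfinish k = pathstart k" "connected X" "X \<inter> path_image k = {}"
  shows "X \<subseteq> inside (path_image k) \<or> X \<subseteq> outside (path_image k)"
proof -
  have "open (inside (path_image k))" "open (outside (path_image k))"
    using Jordan_inside_outside[OF assms(1,2)] by auto
  moreover have "X \<subseteq> inside (path_image k) \<union> outside (path_image k)"
    using assms(4) inside_Un_outside by blast
  ultimately show ?thesis
    using connectedD[OF assms(3)] inside_Int_outside by blast
qed

lemma connected_same_side:
  fixes k :: "real \<Rightarrow> complex"
  assumes "simple_path k" "pathfinish k = pathstart k" "connected X" "X \<inter> path_image k = {}"
    and "x \<in> X" "y \<in> X"
  shows "x \<in> inside (path_image k) \<longleftrightarrow> y \<in> inside (path_image k)"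
  using connected_inside_or_outside[OF assms(1-4)] assms(5,6) inside_Int_outside by blast

lemma Jordan_opposite_side:
  fixes j :: "real \<Rightarrow> complex"
  assumes "simple_path j" "pathfinish j = pathstart j"
    and "S = inside (path_image j) \<or> S = outside (path_image j)"
  obtains R where "connected R" "R \<noteq> {}" "path_image j \<subseteq> closure R"
    and "R \<inter> S = {}" "R \<union> S = - path_image j"
proof
  define R where
    "R = (if S = inside (path_image j) then outside (path_image j) else inside (path_image j))"
  have "z \<notin> outside (path_image j)" if "z \<in> inside (path_image j)" for z
    using that inside_Int_outside by blast
  moreover have "z \<in> inside (path_image j) \<or> z \<in> outside (path_image j) \<longleftrightarrow> z \<notin> path_image j"
    for z
    using inside_Un_outside[of "path_image j"] by blast
  ultimately show "connected R" "R \<noteq> {}" "path_image j \<subseteq> closure R" "R \<inter> S = {}"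
      "R \<union> S = - path_image j"
    using Jordan_inside_outside[OF assms(1,2)] assms(3) unfolding R_def frontier_def by auto
qed

definition theta_arcs ::
    "complex \<Rightarrow> complex \<Rightarrow> (real \<Rightarrow> complex) \<Rightarrow> (real \<Rightarrow> complex) \<Rightarrow> (real \<Rightarrow> complex) \<Rightarrow> bool"
  where "theta_arcs a c g h k \<longleftrightarrow>
    arc g \<and> arc h \<and> arc k \<and>
    pathstart g = a \<and> pathstart h = a \<and> pathstart k = a \<and>
    pathfinish g = c \<and> pathfinish h = c \<and> pathfinish k = c \<and>
    path_image g \<inter> path_image h \<subseteq> {a, c} \<and> path_image g \<inter> path_image k \<subseteq> {a, c} \<and>
    path_image k \<inter> path_image h \<subseteq> {a, c}"

lemma theta_arcs_loop:
  assumes "theta_arcs a c g h k"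
  shows "simple_path (g +++ reversepath h)"
    and "pathfinish (g +++ reversepath h) = pathstart (g +++ reversepath h)"
    and "path_image (g +++ reversepath h) = path_image g \<union> path_image h"
  using assms simple_loop_join_arcs[of g h] unfolding theta_arcs_def by auto

lemma theta_arcs_permute:
  assumes "theta_arcs a c g h k"
  shows "theta_arcs a c g k h" and "theta_arcs a c k h g"
  using assms unfolding theta_arcs_def by blast+

text \<open>The winding numbers about the three cycles of a theta graph lie in \<open>{-1, 0, 1}\<close>,
  and the first is the sum of the other two.\<close>
lemma theta_inside_parity:
  assumes theta: "theta_arcs a c g h k"
    and z: "z \<notin> path_image g \<union> path_image h \<union> path_image k"
  shows "z \<in> inside (path_image g \<union> path_image h) \<longleftrightarrow>
    \<not> (z \<in> inside (path_image g \<union> path_image k) \<longleftrightarrow> z \<in> inside (path_image k \<union> path_image h))"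
proof -
  note loops = theta_arcs_loop[OF theta] theta_arcs_loop[OF theta_arcs_permute(1)[OF theta]]
    theta_arcs_loop[OF theta_arcs_permute(2)[OF theta]]
  have paths: "path g" "path h" "path k" "pathstart h = pathstart g" "pathstart k = pathstart g"
      "pathfinish h = pathfinish g" "pathfinish k = pathfinish g"
    using theta arc_imp_path unfolding theta_arcs_def by auto
  let ?w = "\<lambda>p q. winding_number (p +++ reversepath q) z"
  have w: "?w g h = ?w g k + ?w k h"
    using paths z by (simp add: winding_number_join winding_number_reversepath)
  have cases: "?w g h \<in> {-1, 0, 1}" "?w g k \<in> {-1, 0, 1}" "?w k h \<in> {-1, 0, 1}"
    using simple_closed_path_winding_number_cases[OF loops(1,2)]
      simple_closed_path_winding_number_cases[OF loops(4,5)]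
      simple_closed_path_winding_number_cases[OF loops(7,8)] loops(3,6,9) z
    by auto
  have inside_iff: "z \<in> inside (path_image g \<union> path_image h) \<longleftrightarrow> ?w g h \<noteq> 0"
      "z \<in> inside (path_image g \<union> path_image k) \<longleftrightarrow> ?w g k \<noteq> 0"
      "z \<in> inside (path_image k \<union> path_image h) \<longleftrightarrow> ?w k h \<noteq> 0"
    using simple_closed_path_inside_iff_winding_number[OF loops(1,2)]
      simple_closed_path_inside_iff_winding_number[OF loops(4,5)]
      simple_closed_path_inside_iff_winding_number[OF loops(7,8)] loops(3,6,9) z
    by auto
  have "u + v \<noteq> 0 \<longleftrightarrow> \<not> (u \<noteq> 0 \<longleftrightarrow> v \<noteq> 0)"
    if "u \<in> {-1, 0, 1}" "v \<in> {-1, 0, 1}" "u + v \<in> {-1, 0, 1}" for u v :: complex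
    using that by auto
  from this[OF cases(2,3)] cases(1) have "?w g h \<noteq> 0 \<longleftrightarrow> \<not> (?w g k \<noteq> 0 \<longleftrightarrow> ?w k h \<noteq> 0)"
    by (simp only: w)
  then show ?thesis
    by (simp only: inside_iff)
qed

text \<open>A point of the opposite side and a point of \<open>B\<close> can both be joined to the end of \<open>B\<close> on
  \<open>h\<close> avoiding the cycle \<open>g k\<close>, and to its end on \<open>g\<close> avoiding the cycle \<open>k h\<close>; by parity they
  would then lie on the same side of the cycle \<open>g h\<close>.\<close>
lemma theta_chords_cross:
  assumes theta: "theta_arcs a c g h k"
    and B: "arc B" "pathstart B \<in> path_image g - {a, c}" "pathfinish B \<in> path_image h - {a, c}"
      "path_image B \<inter> (path_image g \<union> path_image h) \<subseteq> {pathstart B, pathfinish B}"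
      "path_image B \<inter> path_image k = {}"
    and S: "S = inside (path_image g \<union> path_image h) \<or> S = outside (path_image g \<union> path_image h)"
      "k ` {0<..<1} \<subseteq> S" "B ` {0<..<1} \<subseteq> S"
  shows False
proof -
  define J where "J = path_image g \<union> path_image h"
  define b d where "b = pathstart B" and "d = pathfinish B"
  note loops = theta_arcs_loop[OF theta] theta_arcs_loop[OF theta_arcs_permute(1)[OF theta]]
    theta_arcs_loop[OF theta_arcs_permute(2)[OF theta]]
  have ends: "pathstart k = a" "pathfinish k = c" "a \<in> J" "c \<in> J" "arc k"
    using theta pathstart_in_path_image pathfinish_in_path_image
    unfolding theta_arcs_def J_def by auto
  obtain R where R: "connected R" "R \<noteq> {}" "J \<subseteq> closure R" "R \<inter> S = {}" "R \<union> S = - J"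
    using Jordan_opposite_side[OF loops(1,2) S(1)[folded loops(3)]] unfolding loops(3) J_def .
  have "R \<inter> J = {}"
    using R(5) by blast
  have Rk: "R \<inter> path_image k = {}"
    using \<open>R \<inter> J = {}\<close> R(4) S(2) ends arc_open_image[OF ends(5)] by auto
  have Bo: "B ` {0<..<1} \<inter> (path_image g \<union> path_image h \<union> path_image k) = {}"
    using B(4,5) arc_open_image[OF B(1)] by auto
  have bd: "d \<notin> path_image g \<union> path_image k" "b \<notin> path_image k \<union> path_image h"
    using theta B(2,3) unfolding theta_arcs_def b_def d_def by auto
  obtain r where r: "r \<in> R"
    using R(2) by blast
  define x where "x = B (1/2)"
  have x: "x \<in> B ` {0<..<1}"
    unfolding x_def by simp
  have dR: "connected (insert d R)"
    by (rule connected_intermediate_closure[OF R(1)])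
      (use B(3) R(3) closure_subset[of R] in \<open>auto simp: J_def d_def\<close>)
  have bR: "connected (insert b R)"
    by (rule connected_intermediate_closure[OF R(1)])
      (use B(2) R(3) closure_subset[of R] in \<open>auto simp: J_def b_def\<close>)
  have dB: "connected (insert d (B ` {0<..<1}))"
    unfolding d_def by (rule connected_insert_arc_open_image[OF B(1) pathfinish_in_path_image])
  have bB: "connected (insert b (B ` {0<..<1}))"
    unfolding b_def by (rule connected_insert_arc_open_image[OF B(1) pathstart_in_path_image])
  note same_side_gk = connected_same_side[OF loops(4,5), unfolded loops(6)]
  note same_side_kh = connected_same_side[OF loops(7,8), unfolded loops(9)]
  have "r \<in> inside (path_image g \<union> path_image k) \<longleftrightarrow>
      d \<in> inside (path_image g \<union> path_image k)"
    by (rule same_side_gk[OF dR]) (use r \<open>R \<inter> J = {}\<close> Rk bd in \<open>auto simp: J_def\<close>)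
  moreover have "x \<in> inside (path_image g \<union> path_image k) \<longleftrightarrow>
      d \<in> inside (path_image g \<union> path_image k)"
    by (rule same_side_gk[OF dB]) (use x Bo bd in auto)
  moreover have "r \<in> inside (path_image k \<union> path_image h) \<longleftrightarrow>
      b \<in> inside (path_image k \<union> path_image h)"
    by (rule same_side_kh[OF bR]) (use r \<open>R \<inter> J = {}\<close> Rk bd in \<open>auto simp: J_def\<close>)
  moreover have "x \<in> inside (path_image k \<union> path_image h) \<longleftrightarrow>
      b \<in> inside (path_image k \<union> path_image h)"
    by (rule same_side_kh[OF bB]) (use x Bo bd in auto)
  moreover have "r \<notin> path_image g \<union> path_image h \<union> path_image k"
    "x \<notin> path_image g \<union> path_image h \<union> path_image k"
    using r x \<open>R \<inter> J = {}\<close> Rk Bo unfolding J_def by auto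
  note parity = theta_inside_parity[OF theta this(1)] theta_inside_parity[OF theta this(2)]
  ultimately have "r \<in> inside J \<longleftrightarrow> x \<in> inside J"
    unfolding J_def parity by blast
  moreover have "r \<in> inside J \<or> r \<in> outside J"
    using r R(5) inside_Un_outside[of J] by blast
  moreover have "\<not> (x \<in> inside J \<and> x \<in> outside J)"
    using inside_Int_outside[of J] by blast
  ultimately show False
    using r x R(4) S unfolding J_def by blast
qed

definition K5_drawing :: "(nat \<Rightarrow> complex) \<Rightarrow> (nat \<Rightarrow> nat \<Rightarrow> real \<Rightarrow> complex) \<Rightarrow> bool"
  where "K5_drawing P g \<longleftrightarrow>
    (\<forall>i<5. \<forall>j<5. i \<noteq> j \<longrightarrow> P i \<noteq> P j \<and> arc (g i j) \<and> pathstart (g i j) = P i \<and>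
      pathfinish (g i j) = P j \<and> path_image (g j i) = path_image (g i j)) \<and>
    (\<forall>i<5. \<forall>j<5. \<forall>k<5. \<forall>l<5. i \<noteq> j \<longrightarrow> k \<noteq> l \<longrightarrow> {i, j} \<noteq> {k, l} \<longrightarrow>
      path_image (g i j) \<inter> path_image (g k l) \<subseteq> P ` ({i, j} \<inter> {k, l}))"

lemma K5_drawingD:
  assumes "K5_drawing P g" "i < 5" "j < 5" "i \<noteq> j"
  shows "P i \<noteq> P j" "arc (g i j)" "pathstart (g i j) = P i" "pathfinish (g i j) = P j"
    and "path_image (g j i) = path_image (g i j)"
  using assms unfolding K5_drawing_def by blast+

lemma K5_drawing_edges_meet:
  assumes "K5_drawing P g" "i < 5" "j < 5" "k < 5" "l < 5" "i \<noteq> j" "k \<noteq> l" "{i, j} \<noteq> {k, l}"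
  shows "path_image (g i j) \<inter> path_image (g k l) \<subseteq> P ` ({i, j} \<inter> {k, l})"
  using assms unfolding K5_drawing_def by blast

lemma K5_drawing_pentagon_theta:
  assumes drawing: "K5_drawing P g"
    and idx: "a < 5" "x < 5" "c < 5" "y < 5" "z < 5" "distinct [a, x, c, y, z]"
  shows "theta_arcs (P a) (P c) (g a x +++ g x c) (g a y +++ (g y z +++ g z c)) (g a c)"
    and "path_image (g a x +++ g x c) = path_image (g a x) \<union> path_image (g x c)"
    and "path_image (g a y +++ (g y z +++ g z c)) =
      path_image (g a y) \<union> path_image (g y z) \<union> path_image (g z c)"
proof -
  note edge = K5_drawingD(2-4)[OF drawing] and meet = K5_drawing_edges_meet[OF drawing]
  have "path_image (g y z) \<inter> path_image (g z c) \<subseteq> {P z}"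
    using meet[of y z z c] idx by (auto simp: doubleton_eq_iff)
  then have yzc: "arc (g y z +++ g z c)"
      "path_image (g y z +++ g z c) = path_image (g y z) \<union> path_image (g z c)"
    using edge[of y z] edge[of z c] idx by (auto intro!: arc_join simp: path_image_join)
  have "path_image (g a x) \<inter> path_image (g x c) \<subseteq> {P x}"
    using meet[of a x x c] idx by (auto simp: doubleton_eq_iff)
  then have P1: "path_image (g a x +++ g x c) = path_image (g a x) \<union> path_image (g x c)"
      "arc (g a x +++ g x c)" "pathstart (g a x +++ g x c) = P a"
      "pathfinish (g a x +++ g x c) = P c"
    using edge[of a x] edge[of x c] idx by (auto intro!: arc_join simp: path_image_join)
  have "path_image (g a y) \<inter> (path_image (g y z) \<union> path_image (g z c)) \<subseteq> {P y}"
    using meet[of a y y z] meet[of a y z c] idx by (auto simp: doubleton_eq_iff)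
  then have P2: "path_image (g a y +++ (g y z +++ g z c)) =
        path_image (g a y) \<union> path_image (g y z) \<union> path_image (g z c)"
      "arc (g a y +++ (g y z +++ g z c))" "pathstart (g a y +++ (g y z +++ g z c)) = P a"
      "pathfinish (g a y +++ (g y z +++ g z c)) = P c"
    using edge[of a y] edge[of y z] edge[of z c] yzc idx
    by (auto intro!: arc_join simp: path_image_join)
  show "path_image (g a x +++ g x c) = path_image (g a x) \<union> path_image (g x c)"
    "path_image (g a y +++ (g y z +++ g z c)) =
      path_image (g a y) \<union> path_image (g y z) \<union> path_image (g z c)"
    by (fact P1(1), fact P2(1))
  show "theta_arcs (P a) (P c) (g a x +++ g x c) (g a y +++ (g y z +++ g z c)) (g a c)"
    unfolding theta_arcs_def P1(1) P2(1)
    using P1(2-4) P2(2-4) edge[of a c] idx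
      meet[of a x a y] meet[of a x y z] meet[of a x z c] meet[of x c a y] meet[of x c y z]
      meet[of x c z c] meet[of a x a c] meet[of x c a c] meet[of a y a c] meet[of y z a c]
      meet[of z c a c]
    by (auto simp: doubleton_eq_iff)
qed

text \<open>The diagonal \<open>a c\<close> is the chord of the theta graph above, and the diagonal from \<open>x\<close> joins
  its two other paths.\<close>
lemma K5_drawing_interleaved_diagonals:
  assumes drawing: "K5_drawing P g"
    and idx: "a < 5" "x < 5" "c < 5" "y < 5" "z < 5" "distinct [a, x, c, y, z]"
    and w: "w \<in> {y, z}"
  defines "C \<equiv> path_image (g a x) \<union> path_image (g x c) \<union> path_image (g a y) \<union>
      path_image (g y z) \<union> path_image (g z c)"
  shows "path_image (g a c) - {P a, P c} \<subseteq> inside C \<longleftrightarrow>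
    \<not> path_image (g x w) - {P x, P w} \<subseteq> inside C"
proof -
  note edge = K5_drawingD[OF drawing] and meet = K5_drawing_edges_meet[OF drawing]
  define P1 where "P1 = g a x +++ g x c"
  define P2 where "P2 = g a y +++ (g y z +++ g z c)"
  note theta = K5_drawing_pentagon_theta(1)[OF drawing idx, folded P1_def P2_def]
    and P1 = K5_drawing_pentagon_theta(2)[OF drawing idx, folded P1_def]
    and P2 = K5_drawing_pentagon_theta(3)[OF drawing idx, folded P2_def]
  have C: "C = path_image P1 \<union> path_image P2"
    unfolding C_def P1 P2 by blast
  have ac: "arc (g a c)" "pathstart (g a c) = P a" "pathfinish (g a c) = P c"
    using edge[of a c] idx by auto
  have xw: "arc (g x w)" "pathstart (g x w) = P x" "pathfinish (g x w) = P w"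
    and Pd: "P x \<noteq> P a" "P x \<noteq> P c" "P w \<noteq> P a" "P w \<noteq> P c"
    using edge[of x w] edge[of x a] edge[of x c] edge[of w a] edge[of w c] idx w by auto
  have "P x \<in> path_image P1" "P w \<in> path_image P2"
    using pathfinish_in_path_image[of "g a x"] pathfinish_in_path_image[of "g a y"]
      pathfinish_in_path_image[of "g y z"] edge[of a x] edge[of a y] edge[of y z] idx w
    unfolding P1 P2 by auto
  moreover have "path_image (g x w) \<inter> (path_image P1 \<union> path_image P2) \<subseteq> {P x, P w}"
    using meet[of x w a x] meet[of x w x c] meet[of x w a y] meet[of x w y z] meet[of x w z c] idx w
    unfolding P1 P2 by (auto simp: doubleton_eq_iff)
  moreover have "path_image (g x w) \<inter> path_image (g a c) = {}"
    using meet[of x w a c] idx w by (auto simp: doubleton_eq_iff)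
  ultimately have B: "arc (g x w)" "pathstart (g x w) \<in> path_image P1 - {P a, P c}"
    "pathfinish (g x w) \<in> path_image P2 - {P a, P c}"
    "path_image (g x w) \<inter> (path_image P1 \<union> path_image P2) \<subseteq> {pathstart (g x w), pathfinish (g x w)}"
    "path_image (g x w) \<inter> path_image (g a c) = {}"
    using xw Pd by auto
  have open_arcs: "g a c ` {0<..<1} = path_image (g a c) - {P a, P c}"
      "g x w ` {0<..<1} = path_image (g x w) - {P x, P w}"
    using arc_open_image[OF ac(1)] arc_open_image[OF xw(1)] ac(2,3) xw(2,3) by simp_all
  note loop = theta_arcs_loop[OF theta]
  have "g a c ` {0<..<1} \<inter> C = {}" "g x w ` {0<..<1} \<inter> C = {}"
    using theta B(4) ac xw unfolding C theta_arcs_def open_arcs by auto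
  then have sides: "g a c ` {0<..<1} \<subseteq> inside C \<or> g a c ` {0<..<1} \<subseteq> outside C"
      "g x w ` {0<..<1} \<subseteq> inside C \<or> g x w ` {0<..<1} \<subseteq> outside C"
    using connected_inside_or_outside[OF loop(1,2) connected_arc_open_image[OF ac(1)]]
      connected_inside_or_outside[OF loop(1,2) connected_arc_open_image[OF xw(1)]]
    unfolding loop(3) C by simp_all
  show ?thesis
  proof (rule ccontr)
    assume "\<not> ?thesis"
    then obtain S where "S = inside C \<or> S = outside C"
        "g a c ` {0<..<1} \<subseteq> S" "g x w ` {0<..<1} \<subseteq> S"
      using sides unfolding open_arcs by blast
    then show False
      using theta_chords_cross[OF theta B] unfolding C by blast
  qed
qed

text \<open>The diagonals \<open>02, 13, 24, 03, 14\<close> of the pentagon \<open>01234\<close> each interleave with the next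
  one cyclically, so they cannot be split between the two sides of the pentagon.\<close>
lemma no_K5_drawing: "\<not> K5_drawing P g"
proof
  assume drawing: "K5_drawing P g"
  define I where "I i j = path_image (g i j)" for i j
  define D where "D i j = path_image (g i j) - {P i, P j}" for i j
  have I: "I 0 4 = I 4 0" "I 4 3 = I 3 4" "I 3 2 = I 2 3" "I 1 0 = I 0 1"
    and D: "D 4 1 = D 1 4" "D 4 2 = D 2 4"
    using K5_drawingD(5)[OF drawing] unfolding I_def D_def by (auto simp: insert_commute)
  define C where "C = I 0 1 \<union> I 1 2 \<union> I 2 3 \<union> I 3 4 \<union> I 4 0"
  have C: "I 0 1 \<union> I 1 2 \<union> I 0 4 \<union> I 4 3 \<union> I 3 2 = C"
      "I 0 4 \<union> I 4 3 \<union> I 0 1 \<union> I 1 2 \<union> I 2 3 = C"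
      "I 1 2 \<union> I 2 3 \<union> I 1 0 \<union> I 0 4 \<union> I 4 3 = C"
    unfolding C_def I by blast+
  note diagonals = K5_drawing_interleaved_diagonals[OF drawing, folded I_def D_def]
  have "D 0 2 \<subseteq> inside C \<longleftrightarrow> \<not> D 1 3 \<subseteq> inside C"
    using diagonals[of 0 1 2 4 3 3] unfolding C by simp
  moreover have "D 0 2 \<subseteq> inside C \<longleftrightarrow> \<not> D 1 4 \<subseteq> inside C"
    using diagonals[of 0 1 2 4 3 4] unfolding C by simp
  moreover have "D 0 3 \<subseteq> inside C \<longleftrightarrow> \<not> D 1 4 \<subseteq> inside C"
    using diagonals[of 0 4 3 1 2 1] unfolding C D by simp
  moreover have "D 0 3 \<subseteq> inside C \<longleftrightarrow> \<not> D 2 4 \<subseteq> inside C"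
    using diagonals[of 0 4 3 1 2 2] unfolding C D by simp
  moreover have "D 1 3 \<subseteq> inside C \<longleftrightarrow> \<not> D 2 4 \<subseteq> inside C"
    using diagonals[of 1 2 3 0 4 4] unfolding C by simp
  ultimately show False by argo
qed

lemma K5_drawing_if_planar:
  assumes "planar V E" and v: "bij_betw v {0..<5::nat} S" and "S \<subseteq> V"
    and complete: "\<And>u w. u \<in> S \<Longrightarrow> w \<in> S \<Longrightarrow> u \<noteq> w \<Longrightarrow> {u, w} \<in> E"
  obtains P g where "K5_drawing P g"
proof -
  obtain p :: "'a \<Rightarrow> complex" and \<gamma> :: "'a set \<Rightarrow> real \<Rightarrow> complex" where
    inj: "inj_on p V" and
    edges: "\<forall>e\<in>E. arc (\<gamma> e) \<and> {pathstart (\<gamma> e), pathfinish (\<gamma> e)} = p ` e \<and>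
      path_image (\<gamma> e) \<inter> p ` V = p ` e" and
    crossings: "\<forall>e\<in>E. \<forall>f\<in>E. e \<noteq> f \<longrightarrow> path_image (\<gamma> e) \<inter> path_image (\<gamma> f) \<subseteq> p ` (e \<inter> f)"
    using assms(1) unfolding planar_def by (elim exE conjE) (rule that)
  have vS: "v i \<in> S" if "i < 5" for i
    using bij_betw_apply[OF v] that by simp
  have v_eq: "v i = v j \<longleftrightarrow> i = j" if "i < 5" "j < 5" for i j
    using bij_betw_imp_inj_on[OF v] that by (auto dest: inj_onD)
  define P where "P i = p (v i)" for i
  define g where "g i j = (if pathstart (\<gamma> {v i, v j}) = P i then \<gamma> {v i, v j}
      else reversepath (\<gamma> {v i, v j}))" for i j
  have P_eq: "P i = P j \<longleftrightarrow> i = j" if "i < 5" "j < 5" for i j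
    using inj_on_eq_iff[OF inj] vS v_eq that assms(3) unfolding P_def by blast
  have "K5_drawing P g"
    unfolding K5_drawing_def
  proof (intro conjI allI impI)
    fix i j :: nat assume ij: "i < 5" "j < 5" "i \<noteq> j"
    have "arc (\<gamma> {v i, v j})" "{pathstart (\<gamma> {v i, v j}), pathfinish (\<gamma> {v i, v j})} = {P i, P j}"
      using edges complete[OF vS vS] ij v_eq unfolding P_def by auto
    then show "P i \<noteq> P j" "arc (g i j)" "pathstart (g i j) = P i" "pathfinish (g i j) = P j"
        "path_image (g j i) = path_image (g i j)"
      using P_eq ij unfolding g_def by (auto simp: arc_reversepath doubleton_eq_iff insert_commute)
  next
    fix i j k l :: nat
    assume ijkl: "i < 5" "j < 5" "k < 5" "l < 5" "i \<noteq> j" "k \<noteq> l" "{i, j} \<noteq> {k, l}"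
    have "path_image (g i j) \<inter> path_image (g k l) \<subseteq> p ` ({v i, v j} \<inter> {v k, v l})"
      using crossings complete vS v_eq ijkl unfolding g_def by (auto simp: doubleton_eq_iff)
    also have "{v i, v j} \<inter> {v k, v l} = v ` ({i, j} \<inter> {k, l})"
      using v_eq ijkl by auto
    finally show "path_image (g i j) \<inter> path_image (g k l) \<subseteq> P ` ({i, j} \<inter> {k, l})"
      unfolding P_def by (simp add: image_image)
  qed
  then show ?thesis
    by (rule that)
qed

lemma planar_K5_free:
  assumes "planar V E" "S \<subseteq> V" "card S = 5"
  shows "\<exists>u\<in>S. \<exists>w\<in>S. u \<noteq> w \<and> {u, w} \<notin> E"
proof (rule ccontr)
  assume "\<not> ?thesis"
  then have complete: "{u, w} \<in> E" if "u \<in> S" "w \<in> S" "u \<noteq> w" for u w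
    using that by blast
  have "finite S"
    using assms(3) by (simp add: card_ge_0_finite)
  then obtain v where "bij_betw v {0..<5::nat} S"
    using ex_bij_betw_nat_finite assms(3) by metis
  then show False
    using K5_drawing_if_planar[OF assms(1) _ assms(2) complete] no_K5_drawing by metis
qed

section \<open>Degrees in \<open>S\<^sub>2\<^sub>,\<^sub>2\<close>-free graphs\<close>

lemma handshaking:
  assumes "finite V" "finite E" "\<forall>e\<in>E. e \<subseteq> V \<and> card e = 2"
  shows "(\<Sum>v\<in>V. card {e\<in>E. v \<in> e}) = 2 * card E"
proof -
  have "(\<Sum>v\<in>V. card {e\<in>E. v \<in> e}) = (\<Sum>v\<in>V. \<Sum>e\<in>E. if v \<in> e then 1 else 0)"
    using assms(2) by (simp add: sum.If_cases Int_def)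
  also have "\<dots> = (\<Sum>e\<in>E. \<Sum>v\<in>V. if v \<in> e then 1 else 0)"
    by (rule sum.swap)
  also have "\<dots> = (\<Sum>e\<in>E. card (V \<inter> e))"
    using assms(1) by (simp add: sum.If_cases)
  also have "\<dots> = (\<Sum>e\<in>E. 2)"
    using assms(3) by (intro sum.cong) (auto simp: Int_absorb1)
  finally show ?thesis by simp
qed

lemma card_edges_le_choose_2:
  assumes "simple_graph V E"
  shows "card E \<le> card V choose 2"
proof -
  have "finite V" "E \<subseteq> {e. e \<subseteq> V \<and> card e = 2}"
    using assms by (auto simp: simple_graph_def)
  then have "card E \<le> card {e. e \<subseteq> V \<and> card e = 2}"
    by (intro card_mono) simp_all
  also have "\<dots> = card V choose 2"
    using \<open>finite V\<close> by (simp add: n_subsets)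
  finally show ?thesis .
qed

lemma obtain_not_in_list:
  assumes "length xs < card A"
  obtains a where "a \<in> A" "a \<notin> set xs"
proof -
  have "card (set xs) < card A"
    using card_length[of xs] assms by linarith
  then have "\<not> A \<subseteq> set xs"
    using card_mono[of "set xs" A] by auto
  then show ?thesis
    using that by blast
qed

locale S22_K5_free_graph =
  fixes V :: "'a set" and E :: "'a set set"
  assumes simple: "simple_graph V E"
    and S22_free: "\<not> contains_S22 V E"
    and K5_free: "\<And>S. S \<subseteq> V \<Longrightarrow> card S = 5 \<Longrightarrow> \<exists>u\<in>S. \<exists>w\<in>S. u \<noteq> w \<and> {u, w} \<notin> E"
begin

definition nbrs :: "'a \<Rightarrow> 'a set"
  where "nbrs v = {u \<in> V. {u, v} \<in> E}"

definition deg :: "'a \<Rightarrow> nat"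
  where "deg v = card (nbrs v)"

definition closed_nbhd :: "'a \<Rightarrow> 'a set"
  where "closed_nbhd v = insert v (nbrs v)"

text \<open>Natural subtraction: only meaningful where all degrees are at most 4.\<close>
definition deficiency :: "'a set \<Rightarrow> nat"
  where "deficiency T = (\<Sum>v\<in>T. 4 - deg v)"

lemma finite_V: "finite V"
  using simple by (simp add: simple_graph_def)

lemma edge_subset: "e \<in> E \<Longrightarrow> e \<subseteq> V \<and> card e = 2"
  using simple by (simp add: simple_graph_def)

lemma finite_E: "finite E"
  using finite_subset[of E "Pow V"] edge_subset finite_V by auto

lemma nbrs_subset: "nbrs v \<subseteq> V"
  unfolding nbrs_def by auto

lemma finite_nbrs: "finite (nbrs v)"
  using finite_subset[OF nbrs_subset finite_V] .

lemma not_in_nbrs: "v \<notin> nbrs v"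
  unfolding nbrs_def using edge_subset by fastforce

lemma nbrs_sym: "u \<in> nbrs v \<longleftrightarrow> v \<in> nbrs u"
  unfolding nbrs_def using edge_subset by (auto simp: insert_commute)

lemma edge_if_nbr: "u \<in> nbrs v \<Longrightarrow> {v, u} \<in> E"
  unfolding nbrs_def by (auto simp: insert_commute)

lemma in_V_if_nbr: "u \<in> nbrs v \<Longrightarrow> v \<in> V"
  using nbrs_sym nbrs_subset by blast

lemma card_incident: "card {e\<in>E. v \<in> e} = deg v"
proof -
  have "{e\<in>E. v \<in> e} = (\<lambda>u. {u, v}) ` nbrs v"
  proof (intro subset_antisym subsetI)
    fix e assume e: "e \<in> {e\<in>E. v \<in> e}"
    then obtain u where "e = {u, v}"
      using edge_subset card_2_iff
      by (metis (no_types, lifting) insertE insert_commute mem_Collect_eq singletonD)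
    then show "e \<in> (\<lambda>u. {u, v}) ` nbrs v"
      using e edge_subset unfolding nbrs_def by auto
  qed (auto simp: nbrs_def)
  moreover have "inj_on (\<lambda>u. {u, v}) (nbrs v)"
    using not_in_nbrs by (auto simp: inj_on_def doubleton_eq_iff)
  ultimately show ?thesis
    unfolding deg_def by (simp add: card_image)
qed

lemma sum_deg: "(\<Sum>v\<in>V. deg v) = 2 * card E"
  using handshaking[OF finite_V finite_E] edge_subset card_incident by simp

lemma twice_card_edges_within_le:
  assumes "M \<subseteq> V"
  shows "2 * card {e\<in>E. e \<subseteq> M} \<le> (\<Sum>v\<in>M. deg v)"
proof -
  have "finite M"
    using finite_subset[OF assms finite_V] .
  then have "2 * card {e\<in>E. e \<subseteq> M} = (\<Sum>v\<in>M. card {e\<in>{e\<in>E. e \<subseteq> M}. v \<in> e})"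
    by (intro handshaking[symmetric]) (use finite_E edge_subset in auto)
  also have "\<dots> \<le> (\<Sum>v\<in>M. card {e\<in>E. v \<in> e})"
    by (intro sum_mono card_mono) (use finite_E in auto)
  finally show ?thesis
    by (simp add: card_incident)
qed

lemma no_double_star:
  assumes "y \<in> nbrs x" "a \<in> nbrs x" "b \<in> nbrs x" "c \<in> nbrs y" "d \<in> nbrs y"
    and "distinct [x, y, a, b, c, d]"
  shows False
proof -
  have "{x, y, a, b, c, d} \<subseteq> V"
    using assms(1-5) nbrs_subset in_V_if_nbr by auto
  then have "contains_S22 V E"
    unfolding contains_S22_def using assms edge_if_nbr by blast
  then show False
    using S22_free by simp
qed

lemma deg_le_2_if_nbr_of_deg_ge_5:
  assumes "deg h \<ge> 5" "y \<in> nbrs h"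
  shows "deg y \<le> 2"
proof (rule ccontr)
  assume "\<not> deg y \<le> 2"
  then have "length [h] < card (nbrs y)"
    unfolding deg_def by simp
  then obtain c where c: "c \<in> nbrs y" "c \<notin> set [h]"
    by (rule obtain_not_in_list)
  have "length [h, c] < card (nbrs y)"
    using \<open>\<not> deg y \<le> 2\<close> unfolding deg_def by simp
  then obtain d where d: "d \<in> nbrs y" "d \<notin> set [h, c]"
    by (rule obtain_not_in_list)
  have "length [y, c, d] < card (nbrs h)"
    using assms(1) unfolding deg_def by simp
  then obtain a where a: "a \<in> nbrs h" "a \<notin> set [y, c, d]"
    by (rule obtain_not_in_list)
  have "length [y, c, d, a] < card (nbrs h)"
    using assms(1) unfolding deg_def by simp
  then obtain b where b: "b \<in> nbrs h" "b \<notin> set [y, c, d, a]"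
    by (rule obtain_not_in_list)
  have "distinct [h, y, a, b, c, d]"
    using a b c d assms(2) not_in_nbrs by auto
  then show False
    using no_double_star[OF assms(2) a(1) b(1) c(1) d(1)] by simp
qed

lemma nbrs_subset_closed_nbhd_if_deg_4:
  assumes "deg x = 4" "y \<in> nbrs x" "deg y \<ge> 3"
  shows "nbrs y \<subseteq> closed_nbhd x"
proof
  fix z assume z: "z \<in> nbrs y"
  show "z \<in> closed_nbhd x"
  proof (rule ccontr)
    assume z_far: "z \<notin> closed_nbhd x"
    have "length [x, z] < card (nbrs y)"
      using assms(3) unfolding deg_def by simp
    then obtain t where t: "t \<in> nbrs y" "t \<notin> set [x, z]"
      by (rule obtain_not_in_list)
    have "length [y, t] < card (nbrs x)"
      using assms(1) unfolding deg_def by simp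
    then obtain a where a: "a \<in> nbrs x" "a \<notin> set [y, t]"
      by (rule obtain_not_in_list)
    have "length [y, t, a] < card (nbrs x)"
      using assms(1) unfolding deg_def by simp
    then obtain b where b: "b \<in> nbrs x" "b \<notin> set [y, t, a]"
      by (rule obtain_not_in_list)
    have "distinct [x, y, a, b, z, t]"
      using a b t z z_far assms(2) not_in_nbrs unfolding closed_nbhd_def by auto
    then show False
      using no_double_star[OF assms(2) a(1) b(1) z t(1)] by simp
  qed
qed

lemma
  assumes "deg x = 4"
  shows closed_nbhd_subset: "closed_nbhd x \<subseteq> V"
    and card_closed_nbhd: "card (closed_nbhd x) = 5"
proof -
  have "nbrs x \<noteq> {}"
    using assms unfolding deg_def by auto
  then show "closed_nbhd x \<subseteq> V"
    using in_V_if_nbr nbrs_subset unfolding closed_nbhd_def by blast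
  show "card (closed_nbhd x) = 5"
    using assms not_in_nbrs finite_nbrs unfolding closed_nbhd_def deg_def by simp
qed

lemma nbrs_subset_closed_nbhd:
  assumes "deg x = 4" "\<forall>y\<in>nbrs x. deg y \<ge> 3" "s \<in> closed_nbhd x"
  shows "nbrs s \<subseteq> closed_nbhd x"
  using assms nbrs_subset_closed_nbhd_if_deg_4 unfolding closed_nbhd_def by auto

text \<open>The closed neighbourhood is not a \<open>K\<^sub>5\<close>, and the ends of a missing edge have all their
  neighbours among the other three of its vertices.\<close>
lemma two_low_deg_in_closed_nbhd:
  assumes "deg x = 4" "\<forall>y\<in>nbrs x. deg y \<ge> 3"
  obtains u w where "u \<in> closed_nbhd x" "w \<in> closed_nbhd x" "u \<noteq> w" "deg u \<le> 3" "deg w \<le> 3"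
proof -
  have low: "deg v \<le> 3"
    if "v \<in> closed_nbhd x" "v' \<in> closed_nbhd x" "v \<noteq> v'" "{v, v'} \<notin> E" for v v'
  proof -
    have "nbrs v \<subseteq> closed_nbhd x - {v, v'}"
      using nbrs_subset_closed_nbhd[OF assms that(1)] not_in_nbrs edge_if_nbr that(4) by blast
    then have "deg v \<le> card (closed_nbhd x - {v, v'})"
      unfolding deg_def by (intro card_mono) (simp_all add: closed_nbhd_def finite_nbrs)
    also have "\<dots> = 3"
      using card_closed_nbhd[OF assms(1)] that(1-3) by (simp add: card_Diff_subset)
    finally show ?thesis .
  qed
  obtain u w where "u \<in> closed_nbhd x" "w \<in> closed_nbhd x" "u \<noteq> w" "{u, w} \<notin> E"
    using K5_free[OF closed_nbhd_subset card_closed_nbhd] assms(1) by blast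
  then show ?thesis
    using that low[of u w] low[of w u] by (simp add: insert_commute)
qed

lemma deficiency_ge_2:
  assumes "finite T" "u \<in> T" "w \<in> T" "u \<noteq> w" "deg u \<le> 3" "deg w \<le> 3"
  shows "deficiency T \<ge> 2"
proof -
  have "2 \<le> deficiency {u, w}"
    using assms(4-6) by (simp add: deficiency_def)
  also have "\<dots> \<le> deficiency T"
    unfolding deficiency_def by (rule sum_mono2) (use assms in auto)
  finally show ?thesis .
qed

lemma deficiency_ge_2_if_nbrs_closed:
  assumes max_deg: "\<forall>v\<in>V. deg v \<le> 4" and "R \<subseteq> V" "R \<noteq> {}"
    and closed: "\<forall>z\<in>R. nbrs z \<subseteq> R"
  shows "deficiency R \<ge> 2"
proof (rule ccontr)
  assume small: "\<not> deficiency R \<ge> 2"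
  have fin: "finite R"
    using finite_subset[OF assms(2) finite_V] .
  have deg_ge_3: "deg z \<ge> 3" if "z \<in> R" for z
  proof -
    have "4 - deg z \<le> deficiency R"
      unfolding deficiency_def by (rule member_le_sum) (use that fin in auto)
    then show ?thesis
      using small by linarith
  qed
  have one_low: "z = z'" if "z \<in> R" "z' \<in> R" "deg z \<le> 3" "deg z' \<le> 3" for z z'
    using deficiency_ge_2[OF fin that(1,2) _ that(3,4)] small by auto
  show False
  proof (cases "\<exists>x\<in>R. deg x = 4")
    case True
    then obtain x where x: "x \<in> R" "deg x = 4"
      by blast
    then have "closed_nbhd x \<subseteq> R" "\<forall>y\<in>nbrs x. deg y \<ge> 3"
      using closed deg_ge_3 unfolding closed_nbhd_def by auto
    then show False
      using two_low_deg_in_closed_nbhd[OF x(2)] one_low by (metis subsetD)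
  next
    case False
    then have low: "deg z \<le> 3" if "z \<in> R" for z
      using max_deg assms(2) that by fastforce
    obtain z where z: "z \<in> R"
      using assms(3) by blast
    then have "nbrs z \<subseteq> {z}"
      using closed one_low low by blast
    then have "nbrs z = {}"
      using not_in_nbrs by blast
    then have "deg z = 0"
      unfolding deg_def by simp
    then show False
      using deg_ge_3 z by fastforce
  qed
qed

lemma exists_deg_4_with_nbrs_deg_ge_3:
  assumes max_deg: "\<forall>v\<in>V. deg v \<le> 4" and "card V \<ge> 6" and "deficiency V \<le> 3"
  obtains x where "x \<in> V" "deg x = 4" "\<forall>y\<in>nbrs x. deg y \<ge> 3"
proof -
  define Low where "Low = {v\<in>V. deg v \<le> 3}"
  define Lo where "Lo = {v\<in>V. deg v \<le> 2}"
  have fin: "finite Low" "finite Lo" "Lo \<subseteq> Low"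
    using finite_V by (auto simp: Low_def Lo_def)
  have "(\<Sum>v\<in>Low. if v \<in> Lo then 1 else 0) = card Lo"
    using sum.inter_restrict[OF fin(1), of "\<lambda>_. 1::nat" Lo] by (simp add: Int_absorb1[OF fin(3)])
  then have "card Low + card Lo = (\<Sum>v\<in>Low. 1 + (if v \<in> Lo then 1 else 0))"
    unfolding sum.distrib by simp
  also have "\<dots> \<le> (\<Sum>v\<in>Low. 4 - deg v)"
    by (rule sum_mono) (auto simp: Low_def Lo_def)
  also have "\<dots> \<le> deficiency V"
    unfolding deficiency_def by (rule sum_mono2) (auto simp: Low_def finite_V)
  finally have "card Low + card Lo \<le> 3"
    using assms(3) by linarith
  moreover have "card (\<Union>(nbrs ` Lo)) \<le> 2 * card Lo"
  proof -
    have "card (\<Union>(nbrs ` Lo)) \<le> (\<Sum>v\<in>Lo. deg v)"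
      unfolding deg_def by (rule card_UN_le[OF fin(2)])
    also have "\<dots> \<le> (\<Sum>v\<in>Lo. 2)"
      by (rule sum_mono) (simp add: Lo_def)
    finally show ?thesis by simp
  qed
  moreover have "card Lo \<le> card Low"
    using card_mono[OF fin(1,3)] .
  ultimately have "card (Low \<union> \<Union>(nbrs ` Lo)) < card V"
    using card_Un_le[of Low "\<Union>(nbrs ` Lo)"] assms(2) by linarith
  moreover have "finite (Low \<union> \<Union>(nbrs ` Lo))"
    using fin finite_nbrs by simp
  ultimately have "\<not> V \<subseteq> Low \<union> \<Union>(nbrs ` Lo)"
    by (meson card_mono leD)
  then obtain x where x: "x \<in> V" "x \<notin> Low" "\<forall>y\<in>Lo. x \<notin> nbrs y"
    by blast
  show ?thesis
  proof (rule that[OF x(1)])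
    show "deg x = 4"
      using x(1,2) max_deg by (fastforce simp: Low_def)
    show "\<forall>y\<in>nbrs x. deg y \<ge> 3"
      using x(3) nbrs_subset nbrs_sym by (fastforce simp: Lo_def)
  qed
qed

lemma card_edges_le_if_max_deg_4:
  assumes max_deg: "\<forall>v\<in>V. deg v \<le> 4" and "card V \<ge> 6"
  shows "card E \<le> 2 * card V - 2"
proof -
  have "(\<Sum>v\<in>V. deg v) + deficiency V = (\<Sum>v\<in>V. 4)"
    unfolding deficiency_def sum.distrib[symmetric] using max_deg by (intro sum.cong) auto
  moreover have "deficiency V \<ge> 4"
  proof (rule ccontr)
    assume "\<not> deficiency V \<ge> 4"
    then have "deficiency V \<le> 3"
      by simp
    then obtain x where x: "x \<in> V" "deg x = 4" "\<forall>y\<in>nbrs x. deg y \<ge> 3"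
      by (rule exists_deg_4_with_nbrs_deg_ge_3[OF max_deg assms(2)])
    define S where "S = closed_nbhd x"
    have S: "S \<subseteq> V" "card S = 5" "\<forall>s\<in>S. nbrs s \<subseteq> S" "S \<noteq> {}"
      using closed_nbhd_subset card_closed_nbhd nbrs_subset_closed_nbhd x(2,3)
      unfolding S_def closed_nbhd_def by auto
    have "V - S \<noteq> {}"
      using S(1,2) assms(2) finite_V card_mono by fastforce
    moreover have "\<forall>z\<in>V - S. nbrs z \<subseteq> V - S"
      using S(3) nbrs_subset nbrs_sym by blast
    ultimately have "deficiency (V - S) \<ge> 2"
      using deficiency_ge_2_if_nbrs_closed[OF max_deg] by blast
    moreover have "deficiency S \<ge> 2"
      using deficiency_ge_2_if_nbrs_closed[OF max_deg S(1,4,3)] .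
    moreover have "deficiency V = deficiency S + deficiency (V - S)"
      unfolding deficiency_def using sum.subset_diff[OF S(1) finite_V, of "\<lambda>v. 4 - deg v"]
      by (simp add: add.commute)
    ultimately show False
      using \<open>\<not> deficiency V \<ge> 4\<close> by linarith
  qed
  ultimately show ?thesis
    using sum_deg by simp
qed

lemma card_edges_le_if_deg_ge_5:
  assumes "h \<in> V" "deg h \<ge> 5"
  shows "card E \<le> 2 * card V - 2"
proof -
  define Lo where "Lo = {v\<in>V. deg v \<le> 2}"
  define M where "M = {v\<in>V. 3 \<le> deg v \<and> deg v \<le> 4}"
  have fin: "finite Lo" "finite M"
    using finite_V by (auto simp: Lo_def M_def)
  have cover: "E \<subseteq> (\<Union>v\<in>Lo. {e\<in>E. v \<in> e}) \<union> {e\<in>E. e \<subseteq> M}"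
  proof
    fix e assume e: "e \<in> E"
    then obtain u w where uw: "e = {u, w}"
      using edge_subset[OF e] unfolding card_2_iff by blast
    then have "u \<in> nbrs w" "w \<in> nbrs u"
      using e edge_subset unfolding nbrs_def by (auto simp: insert_commute)
    then have "deg u \<le> 2 \<or> deg w \<le> 2 \<or> (deg u \<le> 4 \<and> deg w \<le> 4)"
      using deg_le_2_if_nbr_of_deg_ge_5[of u w] deg_le_2_if_nbr_of_deg_ge_5[of w u]
      by (cases "deg u \<ge> 5"; cases "deg w \<ge> 5") auto
    then show "e \<in> (\<Union>v\<in>Lo. {e\<in>E. v \<in> e}) \<union> {e\<in>E. e \<subseteq> M}"
      using e uw \<open>u \<in> nbrs w\<close> \<open>w \<in> nbrs u\<close> nbrs_subset unfolding Lo_def M_def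
      by (cases "deg u \<le> 2"; cases "deg w \<le> 2") auto
  qed
  have "card E \<le> card ((\<Union>v\<in>Lo. {e\<in>E. v \<in> e}) \<union> {e\<in>E. e \<subseteq> M})"
    using card_mono[OF _ cover] finite_E fin(1) by simp
  also have "\<dots> \<le> card (\<Union>v\<in>Lo. {e\<in>E. v \<in> e}) + card {e\<in>E. e \<subseteq> M}"
    by (rule card_Un_le)
  finally have "card E \<le> card (\<Union>v\<in>Lo. {e\<in>E. v \<in> e}) + card {e\<in>E. e \<subseteq> M}" .
  moreover have "card (\<Union>v\<in>Lo. {e\<in>E. v \<in> e}) \<le> 2 * card Lo"
  proof -
    have "card (\<Union>v\<in>Lo. {e\<in>E. v \<in> e}) \<le> (\<Sum>v\<in>Lo. deg v)"
      using card_UN_le[OF fin(1), of "\<lambda>v. {e\<in>E. v \<in> e}"] by (simp add: card_incident)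
    also have "\<dots> \<le> (\<Sum>v\<in>Lo. 2)"
      by (rule sum_mono) (simp add: Lo_def)
    finally show ?thesis by simp
  qed
  moreover have "card {e\<in>E. e \<subseteq> M} \<le> 2 * card M"
  proof -
    have "2 * card {e\<in>E. e \<subseteq> M} \<le> (\<Sum>v\<in>M. deg v)"
      by (rule twice_card_edges_within_le) (simp add: M_def)
    also have "\<dots> \<le> (\<Sum>v\<in>M. 4)"
      by (rule sum_mono) (simp add: M_def)
    finally show ?thesis by simp
  qed
  moreover have "card Lo + card M \<le> card V - 1"
  proof -
    have "card Lo + card M = card (Lo \<union> M)"
      by (rule card_Un_disjoint[symmetric]) (use fin in \<open>auto simp: Lo_def M_def\<close>)
    also have "\<dots> \<le> card (V - {h})"
      by (rule card_mono) (use finite_V assms in \<open>auto simp: Lo_def M_def\<close>)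
    finally show ?thesis
      using assms(1) finite_V by simp
  qed
  ultimately show ?thesis
    by linarith
qed

end

theorem lemma2p1:
  fixes V :: "'a set" and E :: "'a set set" and n :: nat
  assumes "simple_graph V E"
    and "card V = n" and "n \<ge> 1" and "n \<noteq> 5"
    and "planar V E"
    and "\<not> contains_S22 V E"
  shows "card E \<le> 2 * n - 2"
proof (cases "n \<le> 4")
  case True
  have "card E \<le> n choose 2"
    using card_edges_le_choose_2[OF assms(1)] assms(2) by simp
  moreover have "n = 1 \<or> n = 2 \<or> n = 3 \<or> n = 4"
    using True assms(3) by auto
  then have "n choose 2 \<le> 2 * n - 2"
    by (elim disjE) (simp_all add: choose_two)
  ultimately show ?thesis
    by linarith
next
  case False
  then have "card V \<ge> 6"
    using assms(2,4) by simp
  interpret S22_K5_free_graph V E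
    by unfold_locales (use assms(1,6) planar_K5_free[OF assms(5)] in auto)
  show ?thesis
  proof (cases "\<exists>h\<in>V. deg h \<ge> 5")
    case True
    then show ?thesis
      using card_edges_le_if_deg_ge_5 assms(2) by blast
  next
    case False
    then have "\<forall>v\<in>V. deg v \<le> 4"
      by auto
    then show ?thesis
      using card_edges_le_if_max_deg_4 \<open>card V \<ge> 6\<close> assms(2) by blast
  qed
qed

end
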